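(* Let $\Lambda_1$ be a subgroup of $\mathbf{R}^m$ and $\Lambda_2$ a subgroup of $\mathbf{R}^m$ such that $\Lambda_1\oplus\Lambda_2$ is a lattice of covolume $1$ of $\mathbf{R}^m$, and let $C\subset\mathbf{R}^m$ be compact. Let $C_1$ be the projection of $C$ on $\mathbf{R}^m/\Lambda_1$ and $C_2$ the projection of $C$ on $\mathbf{R}^m/(\Lambda_1\oplus\Lambda_2)$, and set \[D_1=\operatorname{Leb}\big\{x\in C_1\mid\operatorname{Card}\{\lambda_2\in\Lambda_2\mid x\in C_1+\lambda_2\}\ge2\big\}.\] Then $\operatorname{Leb}(C_2)\le\operatorname{Leb}(C_1)-D_1/2$.
   Context: $\operatorname{Leb}$ denotes the measure induced by Lebesgue measure on the quotients of $\mathbf{R}^m$; $\Lambda_2$ acts by translation on $\mathbf{R}^m/\Lambda_1$. *)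

theory Defs
  imports "HOL-Analysis.Analysis"
begin

definition add_subgroup :: "(real^'m) set \<Rightarrow> bool" where
  "add_subgroup G \<longleftrightarrow> 0 \<in> G \<and> (\<forall>x\<in>G. \<forall>y\<in>G. x + y \<in> G) \<and> (\<forall>x\<in>G. - x \<in> G)"

text \<open>A lattice of R^m: the integer span of the columns of an invertible matrix B;
  its covolume is the absolute value of the determinant of B.\<close>
definition lattice_with_basis :: "real^'m^'m \<Rightarrow> (real^'m) set" where
  "lattice_with_basis B = {B *v (\<chi> i. of_int (k $ i)) | k :: int^'m. True}"

definition lattice_covol1 :: "(real^'m) set \<Rightarrow> bool" where
  "lattice_covol1 L \<longleftrightarrow> (\<exists>B. invertible B \<and> L = lattice_with_basis B \<and> \<bar>det B\<bar> = 1)"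

definition set_sum :: "(real^'m) set \<Rightarrow> (real^'m) set \<Rightarrow> (real^'m) set" where
  "set_sum A B = {a + b | a b. a \<in> A \<and> b \<in> B}"

text \<open>Subsets of R^m / Lambda are represented by their (Lambda-invariant) preimages in R^m.
  The projection of C to R^m / Lambda is thus C + Lambda.\<close>
definition proj_quot :: "(real^'m) set \<Rightarrow> (real^'m) set \<Rightarrow> (real^'m) set" where
  "proj_quot \<Lambda> C = set_sum C \<Lambda>"

definition fund_domain :: "(real^'m) set \<Rightarrow> (real^'m) set \<Rightarrow> bool" where
  "fund_domain \<Lambda> F \<longleftrightarrow> F \<in> sets lebesgue \<and> (\<forall>x. \<exists>!l. l \<in> \<Lambda> \<and> x + l \<in> F)"

text \<open>Measure on R^m / Lambda induced by Lebesgue measure, applied to a Lambda-invariant set A: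
  Lebesgue measure of A intersected with a measurable fundamental domain.\<close>
definition quot_leb :: "(real^'m) set \<Rightarrow> (real^'m) set \<Rightarrow> ennreal" where
  "quot_leb \<Lambda> A = emeasure lebesgue (A \<inter> (SOME F. fund_domain \<Lambda> F))"

end

theory Submission
  imports Defs
begin

text \<open>
  Let \<open>F\<close> be a measurable fundamental domain of the lattice \<open>L = \<Lambda>1 \<oplus> \<Lambda>2\<close>. The \<open>\<Lambda>2\<close>-translates
  of \<open>F\<close> form a fundamental domain of \<open>\<Lambda>1\<close>, so the quotient measure of a \<open>\<Lambda>1\<close>-invariant set \<open>A\<close>
  is \<open>\<Sum>\<nu>\<in>\<Lambda>2. Leb (F \<inter> (A - \<nu>))\<close>. Put \<open>C1 = C + \<Lambda>1\<close> and \<open>E \<nu> = F \<inter> (C1 - \<nu>)\<close>. Then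
  \<open>(C + L) \<inter> F\<close> is the union of the \<open>E \<nu>\<close>, while a point of \<open>F \<inter> (D - \<nu>)\<close>, where \<open>D \<subseteq> C1\<close> is the
  part covered by at least two \<open>\<Lambda>2\<close>-translates of \<open>C1\<close>, lies in at least two of the \<open>E \<nu>\<close>.
  Integrating the resulting pointwise bound
  \<open>indicator (\<Union>\<nu>. E \<nu>) + (\<Sum>\<nu>. indicator (F \<inter> (D - \<nu>))) / 2 \<le> \<Sum>\<nu>. indicator (E \<nu>)\<close>
  gives \<open>Leb C2 + Leb D / 2 \<le> Leb C1\<close>.
\<close>

section \<open>Translations and Lebesgue measure\<close>

lemma sets_lebesgue_translate:
  fixes A :: "'a::euclidean_space set"
  assumes "A \<in> sets lebesgue"
  shows "{x. x + c \<in> A} \<in> sets lebesgue"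
proof -
  have "{x. x + c \<in> A} = (+) (- c) ` A"
    by (force simp: algebra_simps)
  then show ?thesis
    using lebesgue_sets_translation[OF assms, of "- c"] by simp
qed

lemma emeasure_lebesgue_translate:
  fixes A :: "'a::euclidean_space set"
  shows "emeasure lebesgue {x. x + c \<in> A} = emeasure lebesgue A"
proof -
  have "{x. x + c \<in> A} = (\<lambda>x. 1 *\<^sub>R x + - c) ` A"
    by (force simp: algebra_simps)
  then show ?thesis
    using emeasure_lebesgue_affine[of 1 "- c" A] by simp
qed

lemma emeasure_Int_UN_translates:
  fixes F X :: "'a::euclidean_space set"
  assumes "countable K" and "F \<in> sets lebesgue" and "X \<in> sets lebesgue"
    and disj: "disjoint_family_on (\<lambda>k. {x. x - k \<in> F}) K"
  shows "emeasure lebesgue (X \<inter> (\<Union>k\<in>K. {x. x - k \<in> F}))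
       = (\<integral>\<^sup>+k. emeasure lebesgue (F \<inter> {x. x + k \<in> X}) \<partial>count_space K)"
proof -
  have piece: "X \<inter> {x. x - k \<in> F} = {x. x + - k \<in> F \<inter> {x. x + k \<in> X}}" for k
    by auto
  have "X \<inter> (\<Union>k\<in>K. {x. x - k \<in> F}) = (\<Union>k\<in>K. X \<inter> {x. x - k \<in> F})"
    by blast
  also have "emeasure lebesgue \<dots> = (\<integral>\<^sup>+k. emeasure lebesgue (X \<inter> {x. x - k \<in> F}) \<partial>count_space K)"
  proof (rule emeasure_UN_countable)
    show "X \<inter> {x. x - k \<in> F} \<in> sets lebesgue" for k
      unfolding piece using assms by (intro sets_lebesgue_translate sets.Int)
    show "disjoint_family_on (\<lambda>k. X \<inter> {x. x - k \<in> F}) K"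
      using disj unfolding disjoint_family_on_def by blast
  qed fact
  finally show ?thesis
    unfolding piece emeasure_lebesgue_translate .
qed

section \<open>Double counting\<close>

lemma ennreal_add_half_le:
  fixes a b c :: ennreal
  assumes "a \<le> 1" and "b \<le> c" and "2 \<le> c"
  shows "a + b / 2 \<le> c"
proof (cases c)
  case (real r)
  have "a + b / 2 \<le> 1 + ennreal r / 2"
    using assms real by (intro add_mono divide_right_mono_ennreal) auto
  also have "\<dots> = ennreal (1 + r / 2)"
    using real assms divide_ennreal[of r 2] by simp
  also have "\<dots> \<le> c"
    unfolding real using assms real by (intro ennreal_leI) auto
  finally show ?thesis .
qed simp

lemma nn_integral_count_space_indicator_eq:
  "(\<integral>\<^sup>+i. indicator (E i) x \<partial>count_space I) = emeasure (count_space I) {i \<in> I. x \<in> E i}"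
proof -
  have "(\<integral>\<^sup>+i. indicator (E i) x \<partial>count_space I) = (\<integral>\<^sup>+i. indicator {i \<in> I. x \<in> E i} i \<partial>count_space I)"
    by (intro nn_integral_cong) (auto simp: indicator_def)
  then show ?thesis
    by simp
qed

lemma indicator_UN_plus_half_le:
  assumes sub: "\<And>i. i \<in> I \<Longrightarrow> D i \<subseteq> E i"
    and other: "\<And>i. i \<in> I \<Longrightarrow> x \<in> D i \<Longrightarrow> \<exists>j\<in>I. j \<noteq> i \<and> x \<in> E j"
  shows "indicator (\<Union>i\<in>I. E i) x + (\<integral>\<^sup>+i. indicator (D i) x \<partial>count_space I) / 2
       \<le> (\<integral>\<^sup>+i. indicator (E i) x \<partial>count_space I)"
proof (cases "\<exists>i\<in>I. x \<in> D i")
  case True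
  then obtain i j where "i \<in> I" "j \<in> I" "i \<noteq> j" "x \<in> E i" "x \<in> E j"
    using sub other by blast
  then have "emeasure (count_space I) {i, j} \<le> emeasure (count_space I) {i \<in> I. x \<in> E i}"
    by (intro emeasure_mono) auto
  then have "(2::ennreal) \<le> (\<integral>\<^sup>+i. indicator (E i) x \<partial>count_space I)"
    using \<open>i \<in> I\<close> \<open>j \<in> I\<close> \<open>i \<noteq> j\<close> by (simp add: nn_integral_count_space_indicator_eq)
  moreover have "(\<integral>\<^sup>+i. indicator (D i) x \<partial>count_space I) \<le> (\<integral>\<^sup>+i. indicator (E i) x \<partial>count_space I)"
    using sub by (intro nn_integral_mono) (auto simp: indicator_def)
  ultimately show ?thesis
    by (intro ennreal_add_half_le) (auto simp: indicator_def)
next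
  case False
  then have "(\<integral>\<^sup>+i. indicator (D i) x \<partial>count_space I) = (\<integral>\<^sup>+i. 0 \<partial>count_space I)"
    by (intro nn_integral_cong) (auto simp: indicator_def)
  moreover have "indicator (\<Union>i\<in>I. E i) x \<le> (\<integral>\<^sup>+i. indicator (E i) x \<partial>count_space I)"
  proof (cases "x \<in> (\<Union>i\<in>I. E i)")
    case True
    then obtain i where "i \<in> I" "x \<in> E i"
      by blast
    then have "emeasure (count_space I) {i} \<le> emeasure (count_space I) {i \<in> I. x \<in> E i}"
      by (intro emeasure_mono) auto
    then show ?thesis
      using True \<open>i \<in> I\<close> by (simp add: nn_integral_count_space_indicator_eq)
  qed simp
  ultimately show ?thesis
    by simp
qed

lemma borel_measurable_nn_integral_count_space_indicator:
  assumes "countable I" and "\<And>i. i \<in> I \<Longrightarrow> D i \<in> sets M"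
  shows "(\<lambda>x. \<integral>\<^sup>+i. indicator (D i) x \<partial>count_space I) \<in> borel_measurable M"
proof -
  have "(\<lambda>(x, i). indicator (D i) x :: ennreal) \<in> borel_measurable (M \<Otimes>\<^sub>M count_space I)"
    using measurable_compose_countable'[where g=snd and f="\<lambda>i p. indicator (D i) (fst p) :: ennreal"]
      assms by (auto simp: split_beta')
  then show ?thesis
    by (rule sigma_finite_measure.borel_measurable_nn_integral
          [OF sigma_finite_measure_count_space_countable[OF assms(1)]])
qed

lemma emeasure_UN_plus_half_le:
  assumes "countable I"
    and E: "\<And>i. i \<in> I \<Longrightarrow> E i \<in> sets M" and D: "\<And>i. i \<in> I \<Longrightarrow> D i \<in> sets M"
    and sub: "\<And>i. i \<in> I \<Longrightarrow> D i \<subseteq> E i"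
    and other: "\<And>i x. i \<in> I \<Longrightarrow> x \<in> D i \<Longrightarrow> \<exists>j\<in>I. j \<noteq> i \<and> x \<in> E j"
  shows "emeasure M (\<Union>i\<in>I. E i) + (\<integral>\<^sup>+i. emeasure M (D i) \<partial>count_space I) / 2
       \<le> (\<integral>\<^sup>+i. emeasure M (E i) \<partial>count_space I)"
proof -
  have UE: "(\<Union>i\<in>I. E i) \<in> sets M"
    using assms by (intro sets.countable_UN'') auto
  have swap: "(\<integral>\<^sup>+i. emeasure M (X i) \<partial>count_space I) = (\<integral>\<^sup>+x. \<integral>\<^sup>+i. indicator (X i) x \<partial>count_space I \<partial>M)"
    if "\<And>i. i \<in> I \<Longrightarrow> X i \<in> sets M" for X
    using that \<open>countable I\<close>
    by (subst nn_integral_count_space_nn_integral) (auto intro!: nn_integral_cong)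
  have D_count: "(\<lambda>x. \<integral>\<^sup>+i. indicator (D i) x \<partial>count_space I) \<in> borel_measurable M"
    by (rule borel_measurable_nn_integral_count_space_indicator[OF \<open>countable I\<close> D])
  have "emeasure M (\<Union>i\<in>I. E i) + (\<integral>\<^sup>+i. emeasure M (D i) \<partial>count_space I) / 2
      = (\<integral>\<^sup>+x. indicator (\<Union>i\<in>I. E i) x \<partial>M)
        + (\<integral>\<^sup>+x. (\<integral>\<^sup>+i. indicator (D i) x \<partial>count_space I) / 2 \<partial>M)"
    using UE D D_count by (simp add: swap nn_integral_divide)
  also have "\<dots> = (\<integral>\<^sup>+x. indicator (\<Union>i\<in>I. E i) x + (\<integral>\<^sup>+i. indicator (D i) x \<partial>count_space I) / 2 \<partial>M)"
    using UE D_count by (intro nn_integral_add[symmetric]) auto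
  also have "\<dots> \<le> (\<integral>\<^sup>+x. \<integral>\<^sup>+i. indicator (E i) x \<partial>count_space I \<partial>M)"
    using sub other by (intro nn_integral_mono indicator_UN_plus_half_le) auto
  also have "\<dots> = (\<integral>\<^sup>+i. emeasure M (E i) \<partial>count_space I)"
    using E by (simp add: swap)
  finally show ?thesis .
qed

section \<open>Subgroups and their cosets\<close>

lemma add_subgroupD:
  assumes "add_subgroup G"
  shows add_subgroup_zero: "0 \<in> G"
    and add_subgroup_add: "x \<in> G \<Longrightarrow> y \<in> G \<Longrightarrow> x + y \<in> G"
    and add_subgroup_uminus: "x \<in> G \<Longrightarrow> - x \<in> G"
    and add_subgroup_diff: "x \<in> G \<Longrightarrow> y \<in> G \<Longrightarrow> x - y \<in> G"
  using assms unfolding add_subgroup_def diff_conv_add_uminus by blast+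

lemma add_subgroup_set_sum:
  assumes "add_subgroup A" and "add_subgroup B"
  shows "add_subgroup (set_sum A B)"
  unfolding add_subgroup_def set_sum_def
proof (intro conjI ballI)
  show "0 \<in> {a + b |a b. a \<in> A \<and> b \<in> B}"
    using assms by (auto intro!: exI[of _ 0] add_subgroup_zero)
next
  fix x y assume "x \<in> {a + b |a b. a \<in> A \<and> b \<in> B}" "y \<in> {a + b |a b. a \<in> A \<and> b \<in> B}"
  then obtain a b a' b' where "a \<in> A" "b \<in> B" "a' \<in> A" "b' \<in> B" "x = a + b" "y = a' + b'"
    by blast
  moreover have "x + y = (a + a') + (b + b')" if "x = a + b" "y = a' + b'"
    using that by (simp add: algebra_simps)
  ultimately show "x + y \<in> {a + b |a b. a \<in> A \<and> b \<in> B}"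
    using assms by (blast intro: add_subgroup_add)
next
  fix x assume "x \<in> {a + b |a b. a \<in> A \<and> b \<in> B}"
  then obtain a b where "a \<in> A" "b \<in> B" "x = a + b"
    by blast
  then show "- x \<in> {a + b |a b. a \<in> A \<and> b \<in> B}"
    using assms by (intro CollectI exI[of _ "- a"] exI[of _ "- b"]) (auto intro: add_subgroup_uminus)
qed

lemma set_sum_subset_left: "0 \<in> B \<Longrightarrow> A \<subseteq> set_sum A B"
  unfolding set_sum_def by force

lemma set_sum_subset_right: "0 \<in> A \<Longrightarrow> B \<subseteq> set_sum A B"
  unfolding set_sum_def by force

lemma countable_set_sumD:
  assumes "countable (set_sum A B)" and "0 \<in> A" and "0 \<in> B"
  shows "countable A" and "countable B"
  using countable_subset[OF set_sum_subset_left[OF assms(3)] assms(1)]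
    countable_subset[OF set_sum_subset_right[OF assms(2)] assms(1)] .

lemma set_sum_unique:
  assumes "add_subgroup A" and "add_subgroup B" and "A \<inter> B = {0}"
    and "a \<in> A" "b \<in> B" "a' \<in> A" "b' \<in> B" and "a + b = a' + b'"
  shows "a = a'" and "b = b'"
proof -
  have "a - a' = b' - b"
    using \<open>a + b = a' + b'\<close> by (simp add: algebra_simps)
  moreover have "a - a' \<in> A" "b' - b \<in> B"
    using assms by (auto intro: add_subgroup_diff)
  ultimately have "a - a' = 0"
    using \<open>A \<inter> B = {0}\<close> by (metis IntI singletonD)
  then show "a = a'"
    by simp
  then show "b = b'"
    using \<open>a + b = a' + b'\<close> by simp
qed

lemma mem_proj_quot_iff:
  assumes "add_subgroup \<Lambda>"
  shows "x \<in> proj_quot \<Lambda> A \<longleftrightarrow> (\<exists>l\<in>\<Lambda>. x + l \<in> A)"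
proof
  assume "x \<in> proj_quot \<Lambda> A"
  then obtain a l where "a \<in> A" "l \<in> \<Lambda>" "x = a + l"
    unfolding proj_quot_def set_sum_def by blast
  then show "\<exists>l\<in>\<Lambda>. x + l \<in> A"
    using assms by (intro bexI[of _ "- l"]) (auto intro: add_subgroup_uminus)
next
  assume "\<exists>l\<in>\<Lambda>. x + l \<in> A"
  then obtain l where "l \<in> \<Lambda>" "x + l \<in> A"
    by blast
  then show "x \<in> proj_quot \<Lambda> A"
    using assms unfolding proj_quot_def set_sum_def
    by (intro CollectI exI[of _ "x + l"] exI[of _ "- l"]) (auto intro: add_subgroup_uminus)
qed

lemma proj_quot_set_sum: "proj_quot (set_sum A B) C = proj_quot B (proj_quot A C)"
  unfolding proj_quot_def set_sum_def by (auto; metis add.assoc)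

lemma proj_quot_add_closed:
  assumes "add_subgroup \<Lambda>" and "x \<in> proj_quot \<Lambda> A" and "l \<in> \<Lambda>"
  shows "x + l \<in> proj_quot \<Lambda> A"
proof -
  obtain l' where "l' \<in> \<Lambda>" "x + l' \<in> A"
    using assms mem_proj_quot_iff by blast
  then have "(x + l) + (l' - l) \<in> A" "l' - l \<in> \<Lambda>"
    using assms by (auto intro: add_subgroup_diff)
  then show ?thesis
    using assms mem_proj_quot_iff by blast
qed

lemma sets_lebesgue_proj_quot:
  assumes "add_subgroup \<Lambda>" and "countable \<Lambda>" and "A \<in> sets lebesgue"
  shows "proj_quot \<Lambda> A \<in> sets lebesgue"
proof -
  have "proj_quot \<Lambda> A = (\<Union>l\<in>\<Lambda>. {x. x + l \<in> A})"
    using mem_proj_quot_iff[OF assms(1)] by blast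
  then show ?thesis
    using assms by (auto intro!: sets.countable_UN'' sets_lebesgue_translate)
qed

section \<open>Fundamental domains and quotient measure\<close>

lemma fund_domain_translates_cover:
  assumes "add_subgroup \<Lambda>" and "fund_domain \<Lambda> F"
  shows "(\<Union>l\<in>\<Lambda>. {x. x - l \<in> F}) = UNIV"
proof -
  have "\<exists>l\<in>\<Lambda>. x - l \<in> F" for x
  proof -
    obtain l where "l \<in> \<Lambda>" "x + l \<in> F"
      using assms(2) unfolding fund_domain_def by blast
    then show ?thesis
      using assms(1) by (intro bexI[of _ "- l"]) (auto intro: add_subgroup_uminus)
  qed
  then show ?thesis
    by blast
qed

lemma fund_domain_translates_disjoint:
  assumes "add_subgroup \<Lambda>" and "fund_domain \<Lambda> F"
  shows "disjoint_family_on (\<lambda>l. {x. x - l \<in> F}) \<Lambda>"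
  unfolding disjoint_family_on_def
proof (intro ballI impI)
  fix k l assume "k \<in> \<Lambda>" "l \<in> \<Lambda>" "k \<noteq> l"
  have "- k = - l" if "x + - k \<in> F" "x + - l \<in> F" for x
  proof -
    have "\<exists>!m. m \<in> \<Lambda> \<and> x + m \<in> F"
      using assms(2) unfolding fund_domain_def by blast
    moreover have "- k \<in> \<Lambda>" "- l \<in> \<Lambda>"
      using assms(1) \<open>k \<in> \<Lambda>\<close> \<open>l \<in> \<Lambda>\<close> by (auto intro: add_subgroup_uminus)
    ultimately show ?thesis
      using that by blast
  qed
  then show "{x. x - k \<in> F} \<inter> {x. x - l \<in> F} = {}"
    using \<open>k \<noteq> l\<close> by auto
qed

lemma fund_domain_sets: "fund_domain \<Lambda> F \<Longrightarrow> F \<in> sets lebesgue"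
  unfolding fund_domain_def by (rule conjunct1)

lemma add_closed_iff:
  assumes "add_subgroup \<Lambda>" and "\<And>x l. x \<in> A \<Longrightarrow> l \<in> \<Lambda> \<Longrightarrow> x + l \<in> A" and "l \<in> \<Lambda>"
  shows "x + l \<in> A \<longleftrightarrow> x \<in> A"
  using assms(2)[of "x + l" "- l"] assms(2)[of x l] assms(3) add_subgroup_uminus[OF assms(1)] by auto

lemma emeasure_Int_eq_nn_integral_fund_domain:
  assumes sg: "add_subgroup \<Lambda>" and "countable \<Lambda>" and F: "fund_domain \<Lambda> F"
    and "G \<in> sets lebesgue" and "A \<in> sets lebesgue"
    and inv: "\<And>x l. x \<in> A \<Longrightarrow> l \<in> \<Lambda> \<Longrightarrow> x + l \<in> A"
  shows "emeasure lebesgue (A \<inter> G)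
       = (\<integral>\<^sup>+l. emeasure lebesgue (F \<inter> A \<inter> {x. x + l \<in> G}) \<partial>count_space \<Lambda>)"
proof -
  have "emeasure lebesgue (A \<inter> G) = emeasure lebesgue ((A \<inter> G) \<inter> (\<Union>l\<in>\<Lambda>. {x. x - l \<in> F}))"
    using fund_domain_translates_cover[OF sg F] by simp
  also have "\<dots> = (\<integral>\<^sup>+l. emeasure lebesgue (F \<inter> {x. x + l \<in> A \<inter> G}) \<partial>count_space \<Lambda>)"
    using fund_domain_sets[OF F] assms(4,5)
    by (intro emeasure_Int_UN_translates[OF \<open>countable \<Lambda>\<close> _ _ fund_domain_translates_disjoint[OF sg F]]) auto
  also have "\<dots> = (\<integral>\<^sup>+l. emeasure lebesgue (F \<inter> A \<inter> {x. x + l \<in> G}) \<partial>count_space \<Lambda>)"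
  proof (intro nn_integral_cong)
    fix l assume "l \<in> space (count_space \<Lambda>)"
    then have "F \<inter> {x. x + l \<in> A \<inter> G} = F \<inter> A \<inter> {x. x + l \<in> G}"
      using add_closed_iff[OF sg inv] by auto
    then show "emeasure lebesgue (F \<inter> {x. x + l \<in> A \<inter> G}) = emeasure lebesgue (F \<inter> A \<inter> {x. x + l \<in> G})"
      by simp
  qed
  finally show ?thesis .
qed

text \<open>Both sides expand into sums over \<open>l \<in> \<Lambda>\<close> with the roles of \<open>F\<close> and \<open>G\<close> exchanged;
  translating the \<open>l\<close>-th term by \<open>l\<close> and reindexing \<open>l \<mapsto> -l\<close> identifies the two sums.\<close>

lemma emeasure_Int_fund_domain_eq:
  assumes sg: "add_subgroup \<Lambda>" and cnt: "countable \<Lambda>"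
    and F: "fund_domain \<Lambda> F" and G: "fund_domain \<Lambda> G"
    and A: "A \<in> sets lebesgue" and inv: "\<And>x l. x \<in> A \<Longrightarrow> l \<in> \<Lambda> \<Longrightarrow> x + l \<in> A"
  shows "emeasure lebesgue (A \<inter> F) = emeasure lebesgue (A \<inter> G)"
proof -
  have translate: "emeasure lebesgue (F \<inter> A \<inter> {x. x + l \<in> G})
      = emeasure lebesgue (G \<inter> A \<inter> {x. x + - l \<in> F})" if "l \<in> \<Lambda>" for l
  proof -
    have "G \<inter> A \<inter> {x. x + - l \<in> F} = {x. x + - l \<in> F \<inter> A \<inter> {y. y + l \<in> G}}"
      using add_closed_iff[OF sg inv, of "- l"] that add_subgroup_uminus[OF sg] by auto
    then show ?thesis
      by (simp only: emeasure_lebesgue_translate)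
  qed
  have "bij_betw uminus \<Lambda> \<Lambda>"
    using add_subgroup_uminus[OF sg] by (intro bij_betwI[of _ _ _ uminus]) auto
  have "emeasure lebesgue (A \<inter> G)
      = (\<integral>\<^sup>+l. emeasure lebesgue (F \<inter> A \<inter> {x. x + l \<in> G}) \<partial>count_space \<Lambda>)"
    by (rule emeasure_Int_eq_nn_integral_fund_domain[OF sg cnt F fund_domain_sets[OF G] A inv])
  also have "\<dots> = (\<integral>\<^sup>+l. emeasure lebesgue (G \<inter> A \<inter> {x. x + - l \<in> F}) \<partial>count_space \<Lambda>)"
    by (intro nn_integral_cong) (simp add: translate)
  also have "\<dots> = (\<integral>\<^sup>+l. emeasure lebesgue (G \<inter> A \<inter> {x. x + l \<in> F}) \<partial>count_space \<Lambda>)"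
    by (rule nn_integral_bij_count_space[OF \<open>bij_betw uminus \<Lambda> \<Lambda>\<close>])
  also have "\<dots> = emeasure lebesgue (A \<inter> F)"
    by (rule emeasure_Int_eq_nn_integral_fund_domain[OF sg cnt G fund_domain_sets[OF F] A inv, symmetric])
  finally show ?thesis ..
qed

lemma quot_leb_eq_emeasure_Int:
  assumes "add_subgroup \<Lambda>" and "countable \<Lambda>" and "fund_domain \<Lambda> F"
    and "A \<in> sets lebesgue" and "\<And>x l. x \<in> A \<Longrightarrow> l \<in> \<Lambda> \<Longrightarrow> x + l \<in> A"
  shows "quot_leb \<Lambda> A = emeasure lebesgue (A \<inter> F)"
  unfolding quot_leb_def using assms someI[of "fund_domain \<Lambda>" F]
  by (intro emeasure_Int_fund_domain_eq) auto

lemma fund_domain_set_sum: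
  assumes sg1: "add_subgroup \<Lambda>1" and sg2: "add_subgroup \<Lambda>2" and direct: "\<Lambda>1 \<inter> \<Lambda>2 = {0}"
    and "countable \<Lambda>2" and F: "fund_domain (set_sum \<Lambda>1 \<Lambda>2) F"
  shows "fund_domain \<Lambda>1 (\<Union>\<nu>\<in>\<Lambda>2. {x. x - \<nu> \<in> F})"
  unfolding fund_domain_def
proof (intro conjI allI)
  show "(\<Union>\<nu>\<in>\<Lambda>2. {x. x - \<nu> \<in> F}) \<in> sets lebesgue"
    using fund_domain_sets[OF F] \<open>countable \<Lambda>2\<close> unfolding diff_conv_add_uminus
    by (intro sets.countable_UN'' sets_lebesgue_translate) auto
next
  fix x
  obtain l where l: "l \<in> set_sum \<Lambda>1 \<Lambda>2" "x + l \<in> F"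
    and l_unique: "\<And>l'. l' \<in> set_sum \<Lambda>1 \<Lambda>2 \<Longrightarrow> x + l' \<in> F \<Longrightarrow> l' = l"
    using F unfolding fund_domain_def by metis
  then obtain a b where ab: "a \<in> \<Lambda>1" "b \<in> \<Lambda>2" "l = a + b"
    unfolding set_sum_def by blast
  show "\<exists>!a. a \<in> \<Lambda>1 \<and> x + a \<in> (\<Union>\<nu>\<in>\<Lambda>2. {x. x - \<nu> \<in> F})"
  proof (rule ex1I[of _ a])
    show "a \<in> \<Lambda>1 \<and> x + a \<in> (\<Union>\<nu>\<in>\<Lambda>2. {x. x - \<nu> \<in> F})"
      using ab l sg2 by (auto intro!: bexI[of _ "- b"] add_subgroup_uminus simp: add.assoc)
  next
    fix a' assume "a' \<in> \<Lambda>1 \<and> x + a' \<in> (\<Union>\<nu>\<in>\<Lambda>2. {x. x - \<nu> \<in> F})"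
    then obtain \<nu> where a': "a' \<in> \<Lambda>1" "\<nu> \<in> \<Lambda>2" "x + (a' + - \<nu>) \<in> F"
      by (auto simp: algebra_simps)
    moreover have "a' + - \<nu> \<in> set_sum \<Lambda>1 \<Lambda>2"
      using a' sg2 unfolding set_sum_def by (blast intro: add_subgroup_uminus)
    ultimately have "a' + - \<nu> = a + b"
      using l_unique ab by blast
    then show "a' = a"
      using set_sum_unique(1)[OF sg1 sg2 direct] a' ab sg2 by (blast intro: add_subgroup_uminus)
  qed
qed

lemma quot_leb_eq_nn_integral_translates:
  assumes sg1: "add_subgroup \<Lambda>1" and sg2: "add_subgroup \<Lambda>2" and direct: "\<Lambda>1 \<inter> \<Lambda>2 = {0}"
    and cnt: "countable (set_sum \<Lambda>1 \<Lambda>2)" and F: "fund_domain (set_sum \<Lambda>1 \<Lambda>2) F"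
    and A: "A \<in> sets lebesgue" and inv: "\<And>x l. x \<in> A \<Longrightarrow> l \<in> \<Lambda>1 \<Longrightarrow> x + l \<in> A"
  shows "quot_leb \<Lambda>1 A = (\<integral>\<^sup>+\<nu>. emeasure lebesgue (F \<inter> {x. x + \<nu> \<in> A}) \<partial>count_space \<Lambda>2)"
proof -
  have sub2: "\<Lambda>2 \<subseteq> set_sum \<Lambda>1 \<Lambda>2"
    by (rule set_sum_subset_right[OF add_subgroup_zero[OF sg1]])
  note cnt1 = countable_set_sumD(1)[OF cnt add_subgroup_zero[OF sg1] add_subgroup_zero[OF sg2]]
  note cnt2 = countable_set_sumD(2)[OF cnt add_subgroup_zero[OF sg1] add_subgroup_zero[OF sg2]]
  have "quot_leb \<Lambda>1 A = emeasure lebesgue (A \<inter> (\<Union>\<nu>\<in>\<Lambda>2. {x. x - \<nu> \<in> F}))"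
    by (rule quot_leb_eq_emeasure_Int[OF sg1 cnt1 fund_domain_set_sum[OF sg1 sg2 direct cnt2 F] A inv])
  also have "\<dots> = (\<integral>\<^sup>+\<nu>. emeasure lebesgue (F \<inter> {x. x + \<nu> \<in> A}) \<partial>count_space \<Lambda>2)"
    by (rule emeasure_Int_UN_translates[OF cnt2 fund_domain_sets[OF F] A disjoint_family_on_mono[OF sub2
          fund_domain_translates_disjoint[OF add_subgroup_set_sum[OF sg1 sg2] F]]])
  finally show ?thesis .
qed

lemma quot_leb_proj_quot_set_sum:
  assumes sg1: "add_subgroup \<Lambda>1" and sg2: "add_subgroup \<Lambda>2"
    and cnt: "countable (set_sum \<Lambda>1 \<Lambda>2)" and F: "fund_domain (set_sum \<Lambda>1 \<Lambda>2) F"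
    and C: "C \<in> sets lebesgue"
  shows "quot_leb (set_sum \<Lambda>1 \<Lambda>2) (proj_quot (set_sum \<Lambda>1 \<Lambda>2) C)
       = emeasure lebesgue (\<Union>\<nu>\<in>\<Lambda>2. F \<inter> {x. x + \<nu> \<in> proj_quot \<Lambda>1 C})"
proof -
  have sg: "add_subgroup (set_sum \<Lambda>1 \<Lambda>2)"
    by (rule add_subgroup_set_sum[OF sg1 sg2])
  have "proj_quot (set_sum \<Lambda>1 \<Lambda>2) C \<inter> F = (\<Union>\<nu>\<in>\<Lambda>2. F \<inter> {x. x + \<nu> \<in> proj_quot \<Lambda>1 C})"
    using mem_proj_quot_iff[OF sg2, of _ "proj_quot \<Lambda>1 C"] unfolding proj_quot_set_sum by blast
  moreover have "quot_leb (set_sum \<Lambda>1 \<Lambda>2) (proj_quot (set_sum \<Lambda>1 \<Lambda>2) C)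
      = emeasure lebesgue (proj_quot (set_sum \<Lambda>1 \<Lambda>2) C \<inter> F)"
    by (rule quot_leb_eq_emeasure_Int[OF sg cnt F sets_lebesgue_proj_quot[OF sg cnt C]])
      (rule proj_quot_add_closed[OF sg])
  ultimately show ?thesis
    by simp
qed

section \<open>Lattices\<close>

lemma countable_lattice_with_basis: "countable (lattice_with_basis B)"
proof -
  have "lattice_with_basis B = (\<lambda>k. B *v (\<chi> i. of_int (k $ i))) ` UNIV"
    unfolding lattice_with_basis_def by auto
  then show ?thesis
    by simp
qed

lemma unit_interval_add_of_int_iff:
  fixes a :: real
  shows "0 \<le> a + of_int n \<and> a + of_int n < 1 \<longleftrightarrow> n = - \<lfloor>a\<rfloor>"
  using floor_eq_iff[of "a + of_int n" 0] by auto

text \<open>The fundamental domain is the half-open parallelepiped \<open>B [0, 1)\<^sup>m\<close>; the lattice vector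
  moving \<open>x\<close> into it is determined componentwise by the floor of \<open>B\<^sup>-\<^sup>1 x\<close>.\<close>

lemma fund_domain_lattice_with_basis:
  fixes B :: "real^'m^'m"
  assumes "invertible B"
  shows "\<exists>F. fund_domain (lattice_with_basis B) F"
proof -
  obtain Bi where B_Bi: "B ** Bi = mat 1" and Bi_B: "Bi ** B = mat 1"
    using assms unfolding invertible_def by blast
  define F where "F = {x. \<forall>i. 0 \<le> (Bi *v x) $ i \<and> (Bi *v x) $ i < 1}"
  have [measurable]: "(\<lambda>x. (Bi *v x) $ i) \<in> borel_measurable borel" for i
    by (intro borel_measurable_continuous_onI continuous_intros linear_continuous_on)
      (simp add: linear_conv_bounded_linear[symmetric])
  have "F \<in> sets borel"
    unfolding F_def by measurable
  then have "F \<in> sets lebesgue"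
    using sets_completionI_sets[of F lborel] by simp
  moreover have "\<exists>!l. l \<in> lattice_with_basis B \<and> x + l \<in> F" for x
  proof -
    define k0 :: "int^'m" where "k0 = (\<chi> i. - \<lfloor>(Bi *v x) $ i\<rfloor>)"
    have in_F_iff: "x + B *v (\<chi> i. of_int (k $ i)) \<in> F \<longleftrightarrow> k = k0" for k
    proof -
      have "Bi *v (x + B *v (\<chi> i. of_int (k $ i))) = Bi *v x + (\<chi> i. of_int (k $ i))"
        by (simp add: matrix_vector_right_distrib matrix_vector_mul_assoc Bi_B)
      then show ?thesis
        unfolding F_def k0_def by (simp add: unit_interval_add_of_int_iff vec_eq_iff)
    qed
    show ?thesis
    proof (rule ex1I[of _ "B *v (\<chi> i. of_int (k0 $ i))"])
      show "B *v (\<chi> i. of_int (k0 $ i)) \<in> lattice_with_basis B \<and> x + B *v (\<chi> i. of_int (k0 $ i)) \<in> F"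
        using in_F_iff unfolding lattice_with_basis_def by blast
    next
      fix l assume "l \<in> lattice_with_basis B \<and> x + l \<in> F"
      then show "l = B *v (\<chi> i. of_int (k0 $ i))"
        using in_F_iff unfolding lattice_with_basis_def by auto
    qed
  qed
  ultimately show ?thesis
    unfolding fund_domain_def by blast
qed

section \<open>The multiply covered part\<close>

definition multiply_covered :: "'a::ab_group_add set \<Rightarrow> 'a set \<Rightarrow> 'a set" where
  "multiply_covered \<Lambda> A = {x \<in> A. \<exists>\<mu>\<in>\<Lambda>. \<mu> \<noteq> 0 \<and> x - \<mu> \<in> A}"

lemma infinite_or_card_ge_2_iff:
  assumes "a \<in> S"
  shows "infinite S \<or> 2 \<le> card S \<longleftrightarrow> (\<exists>b\<in>S. b \<noteq> a)"
proof
  assume "infinite S \<or> 2 \<le> card S"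
  moreover have "card S \<le> 1" "finite S" if "S \<subseteq> {a}"
    using card_mono[OF _ that] finite_subset[OF that] by auto
  ultimately have "\<not> S \<subseteq> {a}"
    by linarith
  then show "\<exists>b\<in>S. b \<noteq> a"
    by blast
next
  assume "\<exists>b\<in>S. b \<noteq> a"
  then obtain b where "b \<in> S" "b \<noteq> a"
    by blast
  then have "finite S \<Longrightarrow> card {a, b} \<le> card S"
    using assms by (intro card_mono) auto
  then show "infinite S \<or> 2 \<le> card S"
    using \<open>b \<noteq> a\<close> by auto
qed

lemma multiply_covered_eq:
  fixes \<Lambda> A :: "'a::ab_group_add set"
  assumes "0 \<in> \<Lambda>"
  shows "{x \<in> A. let S = {l \<in> \<Lambda>. x \<in> (\<lambda>y. y + l) ` A} in infinite S \<or> card S \<ge> 2}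
       = multiply_covered \<Lambda> A"
proof -
  have translates: "{l \<in> \<Lambda>. x \<in> (\<lambda>y. y + l) ` A} = {l \<in> \<Lambda>. x - l \<in> A}" for x
  proof -
    have "x \<in> (\<lambda>y. y + l) ` A \<longleftrightarrow> x - l \<in> A" for l
      by (auto intro: rev_image_eqI[of "x - l"])
    then show ?thesis
      by simp
  qed
  have multiple_iff: "infinite {l \<in> \<Lambda>. x - l \<in> A} \<or> 2 \<le> card {l \<in> \<Lambda>. x - l \<in> A}
      \<longleftrightarrow> (\<exists>\<mu>\<in>\<Lambda>. \<mu> \<noteq> 0 \<and> x - \<mu> \<in> A)" if "x \<in> A" for x
  proof -
    have "0 \<in> {l \<in> \<Lambda>. x - l \<in> A}"
      using assms that by simp
    from infinite_or_card_ge_2_iff[OF this] show ?thesis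
      by blast
  qed
  show ?thesis
    unfolding multiply_covered_def translates Let_def
    by (intro Collect_cong conj_cong refl multiple_iff)
qed

lemma sets_lebesgue_multiply_covered:
  fixes \<Lambda> A :: "'a::euclidean_space set"
  assumes "countable \<Lambda>" and "A \<in> sets lebesgue"
  shows "multiply_covered \<Lambda> A \<in> sets lebesgue"
proof -
  have "multiply_covered \<Lambda> A = A \<inter> (\<Union>\<mu>\<in>\<Lambda> - {0}. {x. x + - \<mu> \<in> A})"
    unfolding multiply_covered_def by auto
  then show ?thesis
    using assms by (simp only:) (intro sets.Int sets.countable_UN'' sets_lebesgue_translate; auto)
qed

lemma multiply_covered_add_closed:
  assumes "\<And>x l. x \<in> A \<Longrightarrow> l \<in> \<Lambda>' \<Longrightarrow> x + l \<in> A"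
    and "x \<in> multiply_covered \<Lambda> A" and "l \<in> \<Lambda>'"
  shows "x + l \<in> multiply_covered \<Lambda> A"
proof -
  obtain \<mu> where "x \<in> A" "\<mu> \<in> \<Lambda>" "\<mu> \<noteq> 0" "x - \<mu> \<in> A"
    using assms(2) unfolding multiply_covered_def by blast
  moreover have "x + l - \<mu> = (x - \<mu>) + l"
    by (simp add: algebra_simps)
  ultimately have "x + l \<in> A" "\<mu> \<in> \<Lambda>" "\<mu> \<noteq> 0" "x + l - \<mu> \<in> A"
    using assms(1,3) by metis+
  then show ?thesis
    unfolding multiply_covered_def by blast
qed

lemma quot_leb_proj_quot_set_sum_add_half_le:
  assumes sg1: "add_subgroup \<Lambda>1" and sg2: "add_subgroup \<Lambda>2" and direct: "\<Lambda>1 \<inter> \<Lambda>2 = {0}"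
    and cnt: "countable (set_sum \<Lambda>1 \<Lambda>2)" and F: "fund_domain (set_sum \<Lambda>1 \<Lambda>2) F"
    and C: "C \<in> sets lebesgue"
  shows "quot_leb (set_sum \<Lambda>1 \<Lambda>2) (proj_quot (set_sum \<Lambda>1 \<Lambda>2) C)
         + quot_leb \<Lambda>1 (multiply_covered \<Lambda>2 (proj_quot \<Lambda>1 C)) / 2
       \<le> quot_leb \<Lambda>1 (proj_quot \<Lambda>1 C)"
proof -
  define C1 where "C1 = proj_quot \<Lambda>1 C"
  note cnt1 = countable_set_sumD(1)[OF cnt add_subgroup_zero[OF sg1] add_subgroup_zero[OF sg2]]
  note cnt2 = countable_set_sumD(2)[OF cnt add_subgroup_zero[OF sg1] add_subgroup_zero[OF sg2]]
  have C1: "C1 \<in> sets lebesgue"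
    unfolding C1_def by (rule sets_lebesgue_proj_quot[OF sg1 cnt1 C])
  have C1_inv: "\<And>x l. x \<in> C1 \<Longrightarrow> l \<in> \<Lambda>1 \<Longrightarrow> x + l \<in> C1"
    unfolding C1_def by (rule proj_quot_add_closed[OF sg1])
  define E where "E \<nu> = F \<inter> {x. x + \<nu> \<in> C1}" for \<nu>
  define D where "D \<nu> = F \<inter> {x. x + \<nu> \<in> multiply_covered \<Lambda>2 C1}" for \<nu>
  have "quot_leb (set_sum \<Lambda>1 \<Lambda>2) (proj_quot (set_sum \<Lambda>1 \<Lambda>2) C) = emeasure lebesgue (\<Union>\<nu>\<in>\<Lambda>2. E \<nu>)"
    unfolding E_def C1_def by (rule quot_leb_proj_quot_set_sum[OF sg1 sg2 cnt F C])
  moreover have "quot_leb \<Lambda>1 C1 = (\<integral>\<^sup>+\<nu>. emeasure lebesgue (E \<nu>) \<partial>count_space \<Lambda>2)"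
    unfolding E_def by (rule quot_leb_eq_nn_integral_translates[OF sg1 sg2 direct cnt F C1 C1_inv])
  moreover have "quot_leb \<Lambda>1 (multiply_covered \<Lambda>2 C1) = (\<integral>\<^sup>+\<nu>. emeasure lebesgue (D \<nu>) \<partial>count_space \<Lambda>2)"
    unfolding D_def
    by (rule quot_leb_eq_nn_integral_translates[OF sg1 sg2 direct cnt F
          sets_lebesgue_multiply_covered[OF cnt2 C1] multiply_covered_add_closed[OF C1_inv]])
  moreover have "emeasure lebesgue (\<Union>\<nu>\<in>\<Lambda>2. E \<nu>) + (\<integral>\<^sup>+\<nu>. emeasure lebesgue (D \<nu>) \<partial>count_space \<Lambda>2) / 2
      \<le> (\<integral>\<^sup>+\<nu>. emeasure lebesgue (E \<nu>) \<partial>count_space \<Lambda>2)"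
  proof (rule emeasure_UN_plus_half_le[OF cnt2])
    show "E \<nu> \<in> sets lebesgue" "D \<nu> \<in> sets lebesgue" for \<nu>
      unfolding E_def D_def using fund_domain_sets[OF F] C1 sets_lebesgue_multiply_covered[OF cnt2 C1]
      by (auto intro!: sets_lebesgue_translate)
    show "D \<nu> \<subseteq> E \<nu>" for \<nu>
      unfolding D_def E_def multiply_covered_def by blast
    fix \<nu> x assume "\<nu> \<in> \<Lambda>2" "x \<in> D \<nu>"
    then obtain \<mu> where "\<mu> \<in> \<Lambda>2" "\<mu> \<noteq> 0" "x \<in> F" "x + (\<nu> - \<mu>) \<in> C1"
      unfolding D_def multiply_covered_def by (auto simp: algebra_simps)
    then show "\<exists>j\<in>\<Lambda>2. j \<noteq> \<nu> \<and> x \<in> E j"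
      using \<open>\<nu> \<in> \<Lambda>2\<close> add_subgroup_diff[OF sg2] unfolding E_def by (intro bexI[of _ "\<nu> - \<mu>"]) auto
  qed
  ultimately show ?thesis
    unfolding C1_def by simp
qed

theorem corollary2p14:
  fixes \<Lambda>1 \<Lambda>2 C :: "(real^'m) set"
  assumes "add_subgroup \<Lambda>1" and "add_subgroup \<Lambda>2"
    and "\<Lambda>1 \<inter> \<Lambda>2 = {0}"
    and "lattice_covol1 (set_sum \<Lambda>1 \<Lambda>2)"
    and "compact C"
  shows "quot_leb (set_sum \<Lambda>1 \<Lambda>2) (proj_quot (set_sum \<Lambda>1 \<Lambda>2) C)
         \<le> quot_leb \<Lambda>1 (proj_quot \<Lambda>1 C)
           - quot_leb \<Lambda>1 {x \<in> proj_quot \<Lambda>1 C.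
                let S = {l \<in> \<Lambda>2. x \<in> (\<lambda>y. y + l) ` proj_quot \<Lambda>1 C}
                in infinite S \<or> card S \<ge> 2} / 2"
proof -
  obtain B where "invertible B" and L: "set_sum \<Lambda>1 \<Lambda>2 = lattice_with_basis B"
    using assms(4) unfolding lattice_covol1_def by blast
  then obtain F where F: "fund_domain (set_sum \<Lambda>1 \<Lambda>2) F"
    using fund_domain_lattice_with_basis by metis
  have cnt: "countable (set_sum \<Lambda>1 \<Lambda>2)"
    unfolding L by (rule countable_lattice_with_basis)
  have "C \<in> sets lebesgue"
    using compact_imp_closed[OF assms(5)] by simp
  then show ?thesis
    using quot_leb_proj_quot_set_sum_add_half_le[OF assms(1-3) cnt F]
    unfolding multiply_covered_eq[OF add_subgroup_zero[OF assms(2)]] ennreal_le_minus_iff by blast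
qed

end
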